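(* Let $F_n$ be the Fibonacci numbers, $F_1=F_2=1$, $F_n=F_{n-1}+F_{n-2}$. For $n\ge 1$ put $$\omega_n=\frac{F_{n+2}^2F_{n+3}}{F_{n+1}^2F_n}$$ and consider the cubic equation $$t(2t-1)^2=(t-1)\,\omega_n,$$ whose roots are real and satisfy $G<0<G'<G''$. Then: (a) $G''$ is rational when $n$ is odd, and $G'$ is rational when $n$ is even; (b) this rational root equals $\dfrac{F_{n+3}}{2F_{n+1}}$.
   Context: Background (not needed for the algebraic statement): with $\phi_n=F_{n+1}/F_n$, the $n$-th Fibonacci pentagram has Gauss coordinates $(\alpha,\beta,\gamma,\delta,\epsilon)=(\phi_{n+1},\phi_{n+1},\phi_n,\phi_{n+2}\phi_{n+1}/\phi_n,\phi_n)$, which satisfy $1+\alpha=\gamma\delta$, $1+\beta=\delta\epsilon$, $1+\gamma=\epsilon\alpha$, $1+\delta=\alpha\beta$, $1+\epsilon=\beta\gamma$, and $\omega_n=\alpha\beta\gamma\delta\epsilon=\phi_n\phi_{n+1}^3\phi_{n+2}$. The cubic above is the characteristic equation for the eigenvalues $G,G',G''$ of the quadratic form whose null cone circumscribes the pentagram. *)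

theory Defs
  imports Complex_Main "HOL-Number_Theory.Fib"
begin

definition omega :: "nat \<Rightarrow> real" where
  "omega n = (real (fib (n+2)))^2 * real (fib (n+3)) / ((real (fib (n+1)))^2 * real (fib n))"

definition cubic_eq :: "nat \<Rightarrow> real \<Rightarrow> bool" where
  "cubic_eq n t \<longleftrightarrow> t * (2*t - 1)^2 = (t - 1) * omega n"

end

theory Submission
  imports Defs
begin

text \<open>
  With \<open>a = F\<^sub>n\<close> and \<open>b = F\<^sub>n\<^sub>+\<^sub>1\<close>, the number \<open>r = F\<^sub>n\<^sub>+\<^sub>3 / (2 F\<^sub>n\<^sub>+\<^sub>1) = (a + 2b) / (2b)\<close>
  is a root of the cubic. Dividing it out leaves the quadratic \<open>4t\<^sup>2 + (4r - 4)t - \<omega>\<^sub>n / r\<close>,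
  whose roots have opposite signs because its constant term is negative. Whether \<open>r\<close> is
  the smaller or the larger positive root is decided by the sign of that quadratic at \<open>r\<close>,
  which is the sign of \<open>a\<^sup>2 + ab - b\<^sup>2 = (-1)\<^sup>n\<^sup>+\<^sup>1\<close> (Cassini's identity).
\<close>

definition cubic_cofactor :: "real \<Rightarrow> real \<Rightarrow> real \<Rightarrow> real" where
  "cubic_cofactor w r t = 4*t^2 + (4*r - 4)*t - w/r"

lemma cubic_factor:
  fixes w r t :: real
  assumes "r \<noteq> 0" and root: "r * (2*r - 1)^2 = (r - 1) * w"
  shows "t * (2*t - 1)^2 - (t - 1) * w = (t - r) * cubic_cofactor w r t"
proof -
  have key: "w/r + 4*r^2 - 4*r = w - 1"
    using assms by (simp add: field_simps power2_eq_square)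
  have "(t - r) * cubic_cofactor w r t = 4*t^3 - 4*t^2 - (w/r + 4*r^2 - 4*r)*t + w"
    using \<open>r \<noteq> 0\<close> unfolding cubic_cofactor_def
    by (simp add: field_simps power2_eq_square power3_eq_cube)
  also have "\<dots> = 4*t^3 - 4*t^2 - (w - 1)*t + w" by (simp only: key)
  also have "\<dots> = t * (2*t - 1)^2 - (t - 1) * w"
    by (simp add: algebra_simps power2_eq_square power3_eq_cube)
  finally show ?thesis by simp
qed

lemma quadratic_roots_opposite_signs:
  fixes p c :: real
  assumes "c > 0"
  obtains s1 s2 where "s1 < 0" "0 < s2" "\<And>t. 4*t^2 + p*t - c = 4*(t - s1)*(t - s2)"
proof -
  define D where "D = p^2 + 16*c"
  have "D > 0" using assms unfolding D_def by (simp add: add_nonneg_pos)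
  define s1 where "s1 = (- p - sqrt D) / 8"
  define s2 where "s2 = (- p + sqrt D) / 8"
  have "sqrt D ^ 2 = D" using \<open>D > 0\<close> by simp
  then have factor: "4*t^2 + p*t - c = 4*(t - s1)*(t - s2)" for t
    unfolding s1_def s2_def D_def
    by (simp add: field_simps power2_eq_square)
  have "s1 < s2" using \<open>D > 0\<close> unfolding s1_def s2_def by simp
  moreover have "s1 * s2 < 0"
    using factor[of 0] assms by simp
  ultimately have "s1 < 0" "0 < s2"
    by (auto simp: mult_less_0_iff)
  then show thesis using factor by (rule that)
qed

lemma cubic_roots_around_root:
  fixes r w :: real
  assumes "r > 0" and "w > 0" and root: "r * (2*r - 1)^2 = (r - 1) * w"
  obtains s1 s2 where "{t. t * (2*t - 1)^2 = (t - 1) * w} = {s1, r, s2}" "s1 < 0" "0 < s2"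
    "0 < cubic_cofactor w r r \<longleftrightarrow> s2 < r" "cubic_cofactor w r r < 0 \<longleftrightarrow> r < s2"
proof -
  obtain s1 s2 where "s1 < 0" "0 < s2"
    and cofactor: "\<And>t. cubic_cofactor w r t = 4*(t - s1)*(t - s2)"
    using quadratic_roots_opposite_signs[of "w/r" "4*r - 4"] assms(1,2)
    unfolding cubic_cofactor_def by (metis divide_pos_pos)
  have "t * (2*t - 1)^2 = (t - 1) * w \<longleftrightarrow> (t - r) * (4*(t - s1)*(t - s2)) = 0" for t
    using cubic_factor[OF _ root, of t] cofactor[of t] \<open>r > 0\<close> by force
  then have "{t. t * (2*t - 1)^2 = (t - 1) * w} = {s1, r, s2}" by auto
  moreover have "r - s1 > 0" using \<open>s1 < 0\<close> \<open>r > 0\<close> by simp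
  then have "0 < cubic_cofactor w r r \<longleftrightarrow> s2 < r" "cubic_cofactor w r r < 0 \<longleftrightarrow> r < s2"
    unfolding cofactor by (simp_all add: zero_less_mult_iff mult_less_0_iff)
  ultimately show thesis using that \<open>s1 < 0\<close> \<open>0 < s2\<close> by blast
qed

lemma ratio_root_cofactor:
  fixes a b :: real
  assumes "a > 0" "b > 0"
  defines "w \<equiv> (a + b)^2 * (a + 2*b) / (b^2 * a)" and "r \<equiv> (a + 2*b) / (2*b)"
  shows "r * (2*r - 1)^2 = (r - 1) * w"
    and "cubic_cofactor w r r = 2*(a + b)*(a^2 + a*b - b^2) / (b^2 * a)"
proof -
  show "r * (2*r - 1)^2 = (r - 1) * w"
    using assms unfolding w_def r_def by (simp add: field_simps power2_eq_square)
  have "w = r * (2*(a + b)^2 / (a*b))"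
    using assms unfolding w_def r_def by (simp add: field_simps power2_eq_square)
  moreover have "r \<noteq> 0" using assms unfolding r_def by simp
  ultimately have w_div_r: "w / r = 2*(a + b)^2 / (a*b)" by simp
  have r_part: "8*r^2 - 4*r = 2*(a + 2*b)*(a + b) / b^2"
    using assms(1,2) unfolding r_def by (simp add: field_simps power2_eq_square)
  have "cubic_cofactor w r r = (8*r^2 - 4*r) - w/r"
    unfolding cubic_cofactor_def by (simp add: algebra_simps power2_eq_square)
  also have "\<dots> = 2*(a + 2*b)*(a + b) / b^2 - 2*(a + b)^2 / (a*b)"
    by (simp only: r_part w_div_r)
  also have "\<dots> = 2*(a + b)*(a^2 + a*b - b^2) / (b^2 * a)"
    using assms(1,2) by (simp add: field_simps power2_eq_square)
  finally show "cubic_cofactor w r r = 2*(a + b)*(a^2 + a*b - b^2) / (b^2 * a)" .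
qed

lemma fib_Cassini_real:
  "real (fib n)^2 + real (fib n) * real (fib (n+1)) - real (fib (n+1))^2 = - ((-1)^n)"
proof -
  have "real_of_int (int (fib (Suc (Suc n)) * fib n) - int ((fib (Suc n))^2)) = - ((-1)^n)"
    using fib_Cassini_int[of n] by simp
  then show ?thesis by (simp add: algebra_simps power2_eq_square)
qed

lemma omega_pos:
  assumes "n \<ge> 1"
  shows "omega n > 0"
  using assms unfolding omega_def
  by (intro divide_pos_pos mult_pos_pos zero_less_power) (simp_all add: fib_neq_0_nat add_pos_pos)

lemma fib_ratio_root_cofactor:
  assumes "n \<ge> 1"
  defines "r \<equiv> real (fib (n+3)) / (2 * real (fib (n+1)))"
  shows "cubic_eq n r" and "sgn (cubic_cofactor (omega n) r r) = - ((-1)^n)"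
proof -
  define a where "a = real (fib n)"
  define b where "b = real (fib (n+1))"
  have "a > 0" "b > 0" using assms(1) fib_neq_0_nat unfolding a_def b_def by simp_all
  have fib2: "real (fib (n+2)) = a + b" and fib3: "real (fib (n+3)) = a + 2*b"
    unfolding a_def b_def by (simp_all add: fib_plus_2 numeral_3_eq_3)
  have omega: "omega n = (a + b)^2 * (a + 2*b) / (b^2 * a)" and r: "r = (a + 2*b) / (2*b)"
    unfolding omega_def r_def fib2 fib3 a_def b_def by simp_all
  show "cubic_eq n r"
    using ratio_root_cofactor(1)[OF \<open>a > 0\<close> \<open>b > 0\<close>] unfolding cubic_eq_def omega r .
  have "cubic_cofactor (omega n) r r = 2*(a + b)*(a^2 + a*b - b^2) / (b^2 * a)"
    using ratio_root_cofactor(2)[OF \<open>a > 0\<close> \<open>b > 0\<close>] unfolding omega r .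
  also have "\<dots> = - ((-1)^n) * (2*(a + b) / (b^2 * a))"
    using fib_Cassini_real[of n] unfolding a_def b_def by simp
  finally show "sgn (cubic_cofactor (omega n) r r) = - ((-1)^n)"
    using \<open>a > 0\<close> \<open>b > 0\<close> by (simp add: sgn_mult)
qed

theorem theorem5p4:
  fixes n :: nat
  assumes "n \<ge> 1"
  shows "\<exists>G G' G''. {t. cubic_eq n t} = {G, G', G''} \<and> G < 0 \<and> 0 < G' \<and> G' < G'' \<and>
           (odd n \<longrightarrow> G'' \<in> \<rat> \<and> G'' = real (fib (n+3)) / (2 * real (fib (n+1)))) \<and>
           (even n \<longrightarrow> G' \<in> \<rat> \<and> G' = real (fib (n+3)) / (2 * real (fib (n+1))))"
proof -
  define r where "r = real (fib (n+3)) / (2 * real (fib (n+1)))"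
  have "r > 0" "r \<in> \<rat>" unfolding r_def by (simp_all add: fib_neq_0_nat add_pos_pos)
  obtain s1 s2 where roots: "{t. t * (2*t - 1)^2 = (t - 1) * omega n} = {s1, r, s2}" "s1 < 0" "0 < s2"
    and sign: "0 < cubic_cofactor (omega n) r r \<longleftrightarrow> s2 < r"
              "cubic_cofactor (omega n) r r < 0 \<longleftrightarrow> r < s2"
    using cubic_roots_around_root[OF \<open>r > 0\<close> omega_pos[OF assms]]
      fib_ratio_root_cofactor(1)[OF assms] unfolding r_def cubic_eq_def by blast
  have cubic_roots: "{t. cubic_eq n t} = {s1, r, s2}" using roots(1) unfolding cubic_eq_def .
  have cofactor_sign: "sgn (cubic_cofactor (omega n) r r) = - ((-1)^n)"
    using fib_ratio_root_cofactor(2)[OF assms] unfolding r_def .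
  show ?thesis
  proof (cases "odd n")
    case True
    with cofactor_sign sign have "s2 < r" by (simp add: sgn_1_pos)
    with True cubic_roots roots(2,3) \<open>r \<in> \<rat>\<close> show ?thesis
      by (intro exI[of _ s1] exI[of _ s2] exI[of _ r]) (auto simp: r_def insert_commute)
  next
    case False
    with cofactor_sign sign have "r < s2" by (simp add: sgn_1_neg)
    with False cubic_roots roots(2,3) \<open>r \<in> \<rat>\<close> \<open>r > 0\<close> show ?thesis
      by (intro exI[of _ s1] exI[of _ r] exI[of _ s2]) (auto simp: r_def)
  qed
qed

end
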